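(* Let $\delta=x^{\mathbf d}f(\theta)$ be a homogeneous differential operator on $R$ of degree $\mathbf d\neq\mathbf 0$ with $-\mathbf d\in S$ but $-\mathbf d$ not in the interior of $\sigma^\vee$. If $\delta$ fixes at least one nonzero monomial ideal of $R$, then $\delta$ fixes infinitely many distinct nonzero monomial ideals of $R$.
   Context: Let $\sigma\subseteq\mathbb R^d$ be a full-dimensional, strongly convex rational polyhedral cone, $S=\sigma^\vee\cap\mathbb Z^d$, $R=\mathbb C[S]$ with monomial basis $x^{\mathbf a}$, $\mathbf a\in S$. Let $h_1,\dots,h_n$ be the primitive support functions of the facets of $\sigma^\vee$ (so $S=\{\mathbf a\in\mathbb Z^d: h_i(\mathbf a)\ge 0\ \forall i\}$). $(g,m)!=\prod_{j=0}^m(g-j)$ for $m\ge0$, $=1$ for $m<0$; $H_{\mathbf d}=\prod_i(h_i,h_i(-\mathbf d)-1)!$. For $f\in\mathbb C[t_1,\dots,t_d]$ divisible by $H_{\mathbf d}$, $\delta=x^{\mathbf d}f(\theta)$ is the $\mathbb C$-linear map $R\to R$ with $\delta(x^{\mathbf a})=f(\mathbf a)x^{\mathbf a+\mathbf d}$. An ideal $I$ is $\delta$-fixed if $\delta(I)=I$. *)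

theory Defs
  imports "HOL-Analysis.Analysis"
begin

(* Lattice Z^d is int^'d, ambient real space R^d is real^'d, complex points C^d is complex^'d *)

definition rvec :: "int^'d \<Rightarrow> real^'d" where
  "rvec a = (\<chi> j. real_of_int (a $ j))"

definition cvec :: "int^'d \<Rightarrow> complex^'d" where
  "cvec a = (\<chi> j. complex_of_int (a $ j))"

definition rat_poly_cone :: "(real^'d) set \<Rightarrow> bool" where
  "rat_poly_cone \<sigma> \<longleftrightarrow> (\<exists>V :: (int^'d) set. finite V \<and> \<sigma> = convex_cone hull (rvec ` V))"

definition dual_cone :: "(real^'d) set \<Rightarrow> (real^'d) set" where
  "dual_cone \<sigma> = {a. \<forall>u\<in>\<sigma>. 0 \<le> inner u a}"

(* S = sigma^vee \<inter> Z^d *)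
definition semigrp :: "(real^'d) set \<Rightarrow> (int^'d) set" where
  "semigrp \<sigma> = {a. rvec a \<in> dual_cone \<sigma>}"

definition hval :: "int^'d \<Rightarrow> int^'d \<Rightarrow> int" where
  "hval h a = (\<Sum>j\<in>UNIV. h $ j * a $ j)"

definition hlin :: "int^'d \<Rightarrow> complex^'d \<Rightarrow> complex" where
  "hlin h t = (\<Sum>j\<in>UNIV. complex_of_int (h $ j) * t $ j)"

definition primitive :: "int^'d \<Rightarrow> bool" where
  "primitive h \<longleftrightarrow> (\<forall>k::int. (\<forall>j. k dvd h $ j) \<longrightarrow> is_unit k)"

definition support_fns :: "(real^'d) set \<Rightarrow> (int^'d) set" where
  "support_fns \<sigma> = {h. primitive h \<and>
      (\<exists>F. F facet_of dual_cone \<sigma> \<and> (\<forall>a\<in>dual_cone \<sigma>. 0 \<le> inner (rvec h) a)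
           \<and> F = {a\<in>dual_cone \<sigma>. inner (rvec h) a = 0})}"

definition ffact :: "complex \<Rightarrow> int \<Rightarrow> complex" where
  "ffact g m = (if m < 0 then 1 else (\<Prod>j\<in>{0..nat m}. g - of_nat j))"

definition Hpoly :: "(real^'d) set \<Rightarrow> int^'d \<Rightarrow> complex^'d \<Rightarrow> complex" where
  "Hpoly \<sigma> d t = (\<Prod>h\<in>support_fns \<sigma>. ffact (hlin h t) (hval h (- d) - 1))"

(* polynomial functions C^d -> C, i.e. elements of C[t_1,...,t_d] (C is infinite) *)
definition poly_fun :: "(complex^'d \<Rightarrow> complex) \<Rightarrow> bool" where
  "poly_fun p \<longleftrightarrow> (\<exists>(K :: ('d \<Rightarrow> nat) set) c. finite K \<and>
       p = (\<lambda>t. \<Sum>k\<in>K. c k * (\<Prod>j\<in>UNIV. (t $ j) ^ (k j))))"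

(* R = C[S]: finitely supported coefficient functions with support in S *)
definition Rset :: "(real^'d) set \<Rightarrow> (int^'d \<Rightarrow> complex) set" where
  "Rset \<sigma> = {p. finite {a. p a \<noteq> 0} \<and> (\<forall>a. p a \<noteq> 0 \<longrightarrow> a \<in> semigrp \<sigma>)}"

definition monom :: "int^'d \<Rightarrow> (int^'d \<Rightarrow> complex)" where
  "monom a = (\<lambda>b. if b = a then 1 else 0)"

definition rmult :: "(int^'d \<Rightarrow> complex) \<Rightarrow> (int^'d \<Rightarrow> complex) \<Rightarrow> (int^'d \<Rightarrow> complex)" where
  "rmult p q = (\<lambda>c. \<Sum>a\<in>{a. p a \<noteq> 0}. p a * q (c - a))"

definition ideal_of :: "(real^'d) set \<Rightarrow> (int^'d \<Rightarrow> complex) set \<Rightarrow> bool" where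
  "ideal_of \<sigma> I \<longleftrightarrow> I \<subseteq> Rset \<sigma> \<and> (\<lambda>_. 0) \<in> I
     \<and> (\<forall>p\<in>I. \<forall>q\<in>I. (\<lambda>a. p a + q a) \<in> I)
     \<and> (\<forall>r\<in>Rset \<sigma>. \<forall>p\<in>I. rmult r p \<in> I)"

definition gen_ideal :: "(real^'d) set \<Rightarrow> (int^'d \<Rightarrow> complex) set \<Rightarrow> (int^'d \<Rightarrow> complex) set" where
  "gen_ideal \<sigma> G = \<Inter>{I. ideal_of \<sigma> I \<and> G \<subseteq> I}"

definition monomial_ideal :: "(real^'d) set \<Rightarrow> (int^'d \<Rightarrow> complex) set \<Rightarrow> bool" where
  "monomial_ideal \<sigma> I \<longleftrightarrow> (\<exists>A \<subseteq> semigrp \<sigma>. I = gen_ideal \<sigma> (monom ` A))"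

(* delta = x^d f(theta): the linear map with x^a |-> f(a) x^(a+d) *)
definition delta_op :: "int^'d \<Rightarrow> (complex^'d \<Rightarrow> complex) \<Rightarrow> (int^'d \<Rightarrow> complex) \<Rightarrow> (int^'d \<Rightarrow> complex)" where
  "delta_op d f p = (\<lambda>b. f (cvec (b - d)) * p (b - d))"

end

theory Submission
  imports Defs
begin

text \<open>
  Monomial ideals of \<open>R\<close> are the spans \<open>I\<^sub>E\<close> of monomials \<open>x\<^sup>b\<close>, \<open>b \<in> E\<close>, for semigroup ideals
  \<open>E \<subseteq> S\<close>, and \<open>\<delta>(I\<^sub>E) = I\<^sub>E\<close> is a condition on \<open>E\<close> alone: \<open>E - d \<subseteq> E\<close> with \<open>f\<close> nonvanishing
  on \<open>E - d\<close>, and \<open>a + d \<in> E\<close> whenever \<open>a \<in> E\<close> and \<open>f(a) \<noteq> 0\<close>.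
  Because \<open>\<sigma>\<close> is pointed, \<open>\<sigma>\<^sup>\<or>\<close> is full-dimensional, so the boundary point \<open>-d\<close> has a supporting
  functional \<open>u\<close>: \<open>u \<ge> 0\<close> on \<open>\<sigma>\<^sup>\<or>\<close>, \<open>u(d) = 0\<close>, and \<open>u > 0\<close> on the interior, which contains a
  lattice point \<open>s\<close>. Cutting a \<open>\<delta>\<close>-fixed \<open>E\<close> by a half-space \<open>u \<ge> k\<close> preserves both conditions,
  since \<open>u(d) = 0\<close>; as \<open>k\<close> runs through the values of \<open>u\<close> on \<open>E\<close>, which are unbounded along
  \<open>e + \<nat>s\<close>, these cuts give infinitely many distinct fixed monomial ideals.
\<close>

lemma rvec_add: "rvec (a + b) = rvec a + rvec b"
  by (simp add: rvec_def vec_eq_iff)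

lemma rvec_uminus: "rvec (- a) = - rvec a"
  by (simp add: rvec_def vec_eq_iff)

lemma rvec_zero: "rvec 0 = 0"
  by (simp add: rvec_def vec_eq_iff)

lemma zero_in_semigrp: "0 \<in> semigrp \<sigma>"
  by (simp add: semigrp_def dual_cone_def rvec_zero)

lemma semigrp_add: "a \<in> semigrp \<sigma> \<Longrightarrow> b \<in> semigrp \<sigma> \<Longrightarrow> a + b \<in> semigrp \<sigma>"
  by (auto simp: semigrp_def dual_cone_def rvec_add inner_add_right)

definition monomial_span :: "(real^'d) set \<Rightarrow> (int^'d) set \<Rightarrow> (int^'d \<Rightarrow> complex) set" where
  "monomial_span \<sigma> E = {p \<in> Rset \<sigma>. \<forall>b. p b \<noteq> 0 \<longrightarrow> b \<in> E}"

definition semigrp_ideal :: "(real^'d) set \<Rightarrow> (int^'d) set \<Rightarrow> bool" where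
  "semigrp_ideal \<sigma> E \<longleftrightarrow> E \<subseteq> semigrp \<sigma> \<and> (\<forall>b\<in>E. \<forall>s\<in>semigrp \<sigma>. b + s \<in> E)"

lemma zero_in_monomial_span: "(\<lambda>_. 0) \<in> monomial_span \<sigma> E"
  by (simp add: monomial_span_def Rset_def)

lemma mem_monomial_span:
  assumes "E \<subseteq> semigrp \<sigma>"
  shows "p \<in> monomial_span \<sigma> E \<longleftrightarrow> finite {a. p a \<noteq> 0} \<and> {a. p a \<noteq> 0} \<subseteq> E"
  using assms by (auto simp: monomial_span_def Rset_def)

lemma smult_monom_in_Rset: "a \<in> semigrp \<sigma> \<Longrightarrow> (\<lambda>x. c * monom a x) \<in> Rset \<sigma>"
proof -
  assume a: "a \<in> semigrp \<sigma>"
  have "{x. c * monom a x \<noteq> 0} \<subseteq> {a}" by (auto simp: monom_def)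
  then have "finite {x. c * monom a x \<noteq> 0}" by (rule finite_subset) simp
  then show ?thesis using a by (auto simp: Rset_def monom_def split: if_splits)
qed

lemma monom_in_monomial_span_iff:
  assumes "E \<subseteq> semigrp \<sigma>"
  shows "monom b \<in> monomial_span \<sigma> E \<longleftrightarrow> b \<in> E"
proof
  assume "b \<in> E"
  then show "monom b \<in> monomial_span \<sigma> E"
    using smult_monom_in_Rset[of b \<sigma> 1] assms by (auto simp: monomial_span_def monom_def)
qed (auto simp: monomial_span_def monom_def split: if_splits)

lemma inj_on_monomial_span: "inj_on (monomial_span \<sigma>) (Pow (semigrp \<sigma>))"
proof (rule inj_onI)
  fix E F assume "E \<in> Pow (semigrp \<sigma>)" "F \<in> Pow (semigrp \<sigma>)"
    and "monomial_span \<sigma> E = monomial_span \<sigma> F"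
  then show "E = F" using monom_in_monomial_span_iff by (metis PowD set_eqI)
qed

lemma monomial_span_eq_zero_iff:
  assumes "E \<subseteq> semigrp \<sigma>"
  shows "monomial_span \<sigma> E = {\<lambda>_. 0} \<longleftrightarrow> E = {}"
proof
  assume "E = {}"
  then show "monomial_span \<sigma> E = {\<lambda>_. 0}"
    by (auto simp: monomial_span_def Rset_def)
next
  assume span: "monomial_span \<sigma> E = {\<lambda>_. 0}"
  show "E = {}"
  proof (rule ccontr)
    assume "E \<noteq> {}"
    then obtain b where "monom b \<in> monomial_span \<sigma> E"
      using monom_in_monomial_span_iff[OF assms] by blast
    then have "monom b = (\<lambda>_. 0)" using span by blast
    then have "monom b b = 0" by simp
    then show False by (simp add: monom_def)
  qed
qed

lemma rmult_nonzeroE: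
  assumes "rmult r p c \<noteq> 0"
  obtains a where "r a \<noteq> 0" "p (c - a) \<noteq> 0"
proof -
  have "(\<Sum>a\<in>{a. r a \<noteq> 0}. r a * p (c - a)) \<noteq> 0" using assms by (simp add: rmult_def)
  then obtain a where "a \<in> {a. r a \<noteq> 0}" "r a * p (c - a) \<noteq> 0"
    by (rule sum.not_neutral_contains_not_neutral)
  then show ?thesis using that by simp
qed

lemma support_rmult:
  "{c. rmult r p c \<noteq> 0} \<subseteq> (\<lambda>(a, b). a + b) ` ({a. r a \<noteq> 0} \<times> {b. p b \<noteq> 0})"
proof
  fix c assume "c \<in> {c. rmult r p c \<noteq> 0}"
  then obtain a where "r a \<noteq> 0" "p (c - a) \<noteq> 0" by (auto elim: rmult_nonzeroE)
  then show "c \<in> (\<lambda>(a, b). a + b) ` ({a. r a \<noteq> 0} \<times> {b. p b \<noteq> 0})"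
    by (auto intro!: image_eqI[of _ _ "(a, c - a)"])
qed

lemma ideal_of_monomial_span:
  assumes "semigrp_ideal \<sigma> E"
  shows "ideal_of \<sigma> (monomial_span \<sigma> E)"
  unfolding ideal_of_def
proof (intro conjI ballI)
  have E: "E \<subseteq> semigrp \<sigma>" using assms by (simp add: semigrp_ideal_def)
  show "monomial_span \<sigma> E \<subseteq> Rset \<sigma>" by (auto simp: monomial_span_def)
  show "(\<lambda>_. 0) \<in> monomial_span \<sigma> E" by (rule zero_in_monomial_span)
  fix p q assume "p \<in> monomial_span \<sigma> E" and "q \<in> monomial_span \<sigma> E"
  then have p: "finite {a. p a \<noteq> 0}" "{a. p a \<noteq> 0} \<subseteq> E"
    and q: "finite {a. q a \<noteq> 0}" "{a. q a \<noteq> 0} \<subseteq> E"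
    by (simp_all add: mem_monomial_span[OF E])
  have supp: "{a. p a + q a \<noteq> 0} \<subseteq> {a. p a \<noteq> 0} \<union> {a. q a \<noteq> 0}" by auto
  have "finite {a. p a + q a \<noteq> 0}" using p(1) q(1) by (intro finite_subset[OF supp]) simp
  moreover have "{a. p a + q a \<noteq> 0} \<subseteq> E" using supp p(2) q(2) by blast
  ultimately show "(\<lambda>a. p a + q a) \<in> monomial_span \<sigma> E" by (simp add: mem_monomial_span[OF E])
next
  fix r p assume r: "r \<in> Rset \<sigma>" and p: "p \<in> monomial_span \<sigma> E"
  have E: "E \<subseteq> semigrp \<sigma>" using assms by (simp add: semigrp_ideal_def)
  have "finite {a. r a \<noteq> 0}" "finite {b. p b \<noteq> 0}"
    using r p by (simp_all add: Rset_def mem_monomial_span[OF E])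
  then have "finite {c. rmult r p c \<noteq> 0}" by (intro finite_subset[OF support_rmult]) simp
  moreover have "c \<in> E" if nz: "rmult r p c \<noteq> 0" for c
  proof -
    obtain a where "r a \<noteq> 0" "p (c - a) \<noteq> 0" using nz by (rule rmult_nonzeroE)
    then have "a \<in> semigrp \<sigma>" "c - a \<in> E" using r p by (simp_all add: monomial_span_def Rset_def)
    then have "(c - a) + a \<in> E" using assms unfolding semigrp_ideal_def by blast
    then show ?thesis by simp
  qed
  ultimately show "rmult r p \<in> monomial_span \<sigma> E"
    unfolding mem_monomial_span[OF E] by blast
qed

lemma ideal_of_sum:
  assumes "ideal_of \<sigma> I" "finite F" "\<And>b. b \<in> F \<Longrightarrow> g b \<in> I"
  shows "(\<lambda>x. \<Sum>b\<in>F. g b x) \<in> I"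
  using assms(2,3)
proof (induction F rule: finite_induct)
  case empty
  then show ?case using assms(1) by (simp add: ideal_of_def)
next
  case (insert b F)
  have add: "p \<in> I \<Longrightarrow> q \<in> I \<Longrightarrow> (\<lambda>a. p a + q a) \<in> I" for p q
    using assms(1) by (simp add: ideal_of_def)
  have "(\<lambda>x. g b x + (\<Sum>b\<in>F. g b x)) \<in> I"
    using insert by (intro add) simp_all
  then show ?case using insert by simp
qed

lemma rmult_smult_monom: "rmult (\<lambda>x. c * monom s x) (monom a) = (\<lambda>x. c * monom (a + s) x)"
proof (cases "c = 0")
  case False
  then have support: "{x. c * monom s x \<noteq> 0} = {s}" by (auto simp: monom_def)
  show ?thesis
  proof
    fix x
    have "rmult (\<lambda>x. c * monom s x) (monom a) x = c * monom s s * monom a (x - s)"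
      unfolding rmult_def support by simp
    also have "\<dots> = c * monom (a + s) x" by (auto simp: monom_def)
    finally show "rmult (\<lambda>x. c * monom s x) (monom a) x = c * monom (a + s) x" .
  qed
qed (simp add: rmult_def)

lemma sum_monom_expansion:
  assumes "finite {b. p b \<noteq> 0}"
  shows "(\<lambda>x. \<Sum>b\<in>{b. p b \<noteq> 0}. p b * monom b x) = p"
proof
  fix x
  have "(\<Sum>b\<in>{b. p b \<noteq> 0}. p b * monom b x) = (\<Sum>b\<in>{b. p b \<noteq> 0}. if b = x then p b else 0)"
    by (rule sum.cong) (auto simp: monom_def)
  then show "(\<Sum>b\<in>{b. p b \<noteq> 0}. p b * monom b x) = p x" using assms by (simp add: sum.delta)
qed

lemma monomial_span_subset_ideal:
  assumes I: "ideal_of \<sigma> I" and A: "monom ` A \<subseteq> I"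
  shows "monomial_span \<sigma> {a + s |a s. a \<in> A \<and> s \<in> semigrp \<sigma>} \<subseteq> I"
proof
  fix p assume p: "p \<in> monomial_span \<sigma> {a + s |a s. a \<in> A \<and> s \<in> semigrp \<sigma>}"
  then have fin: "finite {b. p b \<noteq> 0}" by (simp add: monomial_span_def Rset_def)
  have "(\<lambda>x. \<Sum>b\<in>{b. p b \<noteq> 0}. p b * monom b x) \<in> I"
  proof (rule ideal_of_sum[OF I fin])
    fix b assume "b \<in> {b. p b \<noteq> 0}"
    then obtain a s where a: "a \<in> A" and s: "s \<in> semigrp \<sigma>" and b: "b = a + s"
      using p by (auto simp: monomial_span_def)
    have "rmult (\<lambda>x. p b * monom s x) (monom a) \<in> I"
      using I A a smult_monom_in_Rset[OF s] unfolding ideal_of_def by blast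
    then show "(\<lambda>x. p b * monom b x) \<in> I" by (simp add: rmult_smult_monom b)
  qed
  then show "p \<in> I" by (simp add: sum_monom_expansion[OF fin])
qed

lemma semigrp_ideal_generated:
  assumes "A \<subseteq> semigrp \<sigma>"
  shows "semigrp_ideal \<sigma> {a + s |a s. a \<in> A \<and> s \<in> semigrp \<sigma>}"
  unfolding semigrp_ideal_def
proof (intro conjI ballI)
  fix b t assume "b \<in> {a + s |a s. a \<in> A \<and> s \<in> semigrp \<sigma>}" and t: "t \<in> semigrp \<sigma>"
  then obtain a s where "a \<in> A" "s \<in> semigrp \<sigma>" "b = a + s" by blast
  then have "b + t = a + (s + t) \<and> a \<in> A \<and> s + t \<in> semigrp \<sigma>"
    using t by (simp add: add.assoc semigrp_add)
  then show "b + t \<in> {a + s |a s. a \<in> A \<and> s \<in> semigrp \<sigma>}" by blast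
qed (use assms in \<open>auto intro: semigrp_add\<close>)

lemma semigrp_ideal_sums_eq:
  assumes "semigrp_ideal \<sigma> E"
  shows "{a + s |a s. a \<in> E \<and> s \<in> semigrp \<sigma>} = E"
proof
  show "{a + s |a s. a \<in> E \<and> s \<in> semigrp \<sigma>} \<subseteq> E"
    using assms by (auto simp: semigrp_ideal_def)
  show "E \<subseteq> {a + s |a s. a \<in> E \<and> s \<in> semigrp \<sigma>}"
  proof
    fix b assume "b \<in> E"
    then have "b = b + 0 \<and> b \<in> E \<and> 0 \<in> semigrp \<sigma>" by (simp add: zero_in_semigrp)
    then show "b \<in> {a + s |a s. a \<in> E \<and> s \<in> semigrp \<sigma>}" by blast
  qed
qed

lemma gen_ideal_monom:
  assumes "A \<subseteq> semigrp \<sigma>"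
  shows "gen_ideal \<sigma> (monom ` A) = monomial_span \<sigma> {a + s |a s. a \<in> A \<and> s \<in> semigrp \<sigma>}"
    (is "_ = monomial_span \<sigma> ?E")
proof
  have "monom a \<in> monomial_span \<sigma> ?E" if "a \<in> A" for a
  proof -
    have "a + 0 \<in> ?E" using that zero_in_semigrp by blast
    then show ?thesis using semigrp_ideal_generated[OF assms]
      by (simp add: monom_in_monomial_span_iff semigrp_ideal_def)
  qed
  then show "gen_ideal \<sigma> (monom ` A) \<subseteq> monomial_span \<sigma> ?E"
    unfolding gen_ideal_def using ideal_of_monomial_span[OF semigrp_ideal_generated[OF assms]]
    by blast
  show "monomial_span \<sigma> ?E \<subseteq> gen_ideal \<sigma> (monom ` A)"
    unfolding gen_ideal_def using monomial_span_subset_ideal by blast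
qed

lemma monomial_ideal_iff:
  "monomial_ideal \<sigma> I \<longleftrightarrow> (\<exists>E. semigrp_ideal \<sigma> E \<and> I = monomial_span \<sigma> E)"
proof
  assume "monomial_ideal \<sigma> I"
  then obtain A where "A \<subseteq> semigrp \<sigma>" "I = gen_ideal \<sigma> (monom ` A)"
    by (auto simp: monomial_ideal_def)
  then show "\<exists>E. semigrp_ideal \<sigma> E \<and> I = monomial_span \<sigma> E"
    by (intro exI[of _ "{a + s |a s. a \<in> A \<and> s \<in> semigrp \<sigma>}"])
      (simp add: gen_ideal_monom semigrp_ideal_generated)
next
  assume "\<exists>E. semigrp_ideal \<sigma> E \<and> I = monomial_span \<sigma> E"
  then obtain E where E: "semigrp_ideal \<sigma> E" and I: "I = monomial_span \<sigma> E" by blast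
  then have "I = gen_ideal \<sigma> (monom ` E)"
    using gen_ideal_monom[of E \<sigma>] by (simp add: semigrp_ideal_sums_eq semigrp_ideal_def)
  then show "monomial_ideal \<sigma> I"
    unfolding monomial_ideal_def using E by (auto simp: semigrp_ideal_def)
qed

definition delta_stable :: "int^'d \<Rightarrow> (complex^'d \<Rightarrow> complex) \<Rightarrow> (int^'d) set \<Rightarrow> bool" where
  "delta_stable d f E \<longleftrightarrow>
     (\<forall>b\<in>E. b - d \<in> E \<and> f (cvec (b - d)) \<noteq> 0) \<and> (\<forall>a\<in>E. f (cvec a) \<noteq> 0 \<longrightarrow> a + d \<in> E)"

lemma delta_op_monom: "delta_op d f (monom a) = (\<lambda>b. f (cvec a) * monom (a + d) b)"
  by (auto simp: delta_op_def monom_def fun_eq_iff)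

lemma delta_op_image_monomial_span_subset:
  assumes E: "E \<subseteq> semigrp \<sigma>" and ascend: "\<And>a. a \<in> E \<Longrightarrow> f (cvec a) \<noteq> 0 \<Longrightarrow> a + d \<in> E"
  shows "delta_op d f ` monomial_span \<sigma> E \<subseteq> monomial_span \<sigma> E"
proof
  fix q assume "q \<in> delta_op d f ` monomial_span \<sigma> E"
  then obtain p where p: "p \<in> monomial_span \<sigma> E" and q: "q = delta_op d f p" by blast
  have supp: "{b. q b \<noteq> 0} \<subseteq> (\<lambda>a. a + d) ` {a. p a \<noteq> 0}"
    by (auto simp: q delta_op_def intro!: image_eqI[of _ _ "_ - d"])
  have "finite {b. q b \<noteq> 0}"
    using p E by (intro finite_subset[OF supp]) (simp add: mem_monomial_span)
  moreover have "b \<in> E" if "q b \<noteq> 0" for b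
  proof -
    have "f (cvec (b - d)) \<noteq> 0" "p (b - d) \<noteq> 0" using that by (auto simp: q delta_op_def)
    moreover have "b - d \<in> E" using p \<open>p (b - d) \<noteq> 0\<close> by (simp add: monomial_span_def)
    ultimately have "(b - d) + d \<in> E" using ascend by blast
    then show ?thesis by simp
  qed
  ultimately show "q \<in> monomial_span \<sigma> E" by (auto simp: mem_monomial_span[OF E])
qed

lemma monomial_span_subset_delta_op_image:
  assumes E: "E \<subseteq> semigrp \<sigma>"
    and descend: "\<And>b. b \<in> E \<Longrightarrow> b - d \<in> E \<and> f (cvec (b - d)) \<noteq> 0"
  shows "monomial_span \<sigma> E \<subseteq> delta_op d f ` monomial_span \<sigma> E"
proof
  fix q assume q: "q \<in> monomial_span \<sigma> E"
  then have q_supp: "q b \<noteq> 0 \<Longrightarrow> b \<in> E" for b by (simp add: monomial_span_def)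
  define p where "p a = (if f (cvec a) \<noteq> 0 then q (a + d) / f (cvec a) else 0)" for a
  have supp: "{a. p a \<noteq> 0} \<subseteq> (\<lambda>b. b - d) ` {b. q b \<noteq> 0}"
    by (auto simp: p_def split: if_splits intro!: image_eqI[of _ _ "_ + d"])
  have "finite {a. p a \<noteq> 0}"
    using q E by (intro finite_subset[OF supp]) (simp add: mem_monomial_span)
  moreover have "a \<in> E" if "p a \<noteq> 0" for a
  proof -
    have "q (a + d) \<noteq> 0" using that by (auto simp: p_def split: if_splits)
    then have "(a + d) - d \<in> E" using descend q_supp by blast
    then show ?thesis by simp
  qed
  ultimately have "p \<in> monomial_span \<sigma> E" by (auto simp: mem_monomial_span[OF E])
  moreover have "delta_op d f p = q"
  proof
    fix b
    show "delta_op d f p b = q b"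
    proof (cases "f (cvec (b - d)) = 0")
      case True
      then have "q b = 0" using descend q_supp by blast
      then show ?thesis using True by (simp add: delta_op_def p_def)
    qed (simp add: delta_op_def p_def)
  qed
  ultimately show "q \<in> delta_op d f ` monomial_span \<sigma> E" by blast
qed

lemma delta_op_fixes_monomial_span_iff:
  assumes E: "E \<subseteq> semigrp \<sigma>"
  shows "delta_op d f ` monomial_span \<sigma> E = monomial_span \<sigma> E \<longleftrightarrow> delta_stable d f E"
proof
  assume fixed: "delta_op d f ` monomial_span \<sigma> E = monomial_span \<sigma> E"
  have "b - d \<in> E \<and> f (cvec (b - d)) \<noteq> 0" if b: "b \<in> E" for b
  proof -
    have "monom b \<in> delta_op d f ` monomial_span \<sigma> E"
      using fixed b monom_in_monomial_span_iff[OF E] by simp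
    then obtain p where p: "p \<in> monomial_span \<sigma> E" and "monom b = delta_op d f p" by blast
    then have "f (cvec (b - d)) * p (b - d) = 1"
      by (metis (mono_tags) delta_op_def monom_def)
    then have "f (cvec (b - d)) \<noteq> 0" "p (b - d) \<noteq> 0" by auto
    then show ?thesis using p by (simp add: monomial_span_def)
  qed
  moreover have "a + d \<in> E" if a: "a \<in> E" and fa: "f (cvec a) \<noteq> 0" for a
  proof -
    have "delta_op d f (monom a) \<in> monomial_span \<sigma> E"
      using fixed a monom_in_monomial_span_iff[OF E] by blast
    moreover have "delta_op d f (monom a) (a + d) \<noteq> 0"
      unfolding delta_op_monom using fa by (simp add: monom_def)
    ultimately show ?thesis by (simp add: monomial_span_def)
  qed
  ultimately show "delta_stable d f E" by (simp add: delta_stable_def)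
next
  assume "delta_stable d f E"
  then show "delta_op d f ` monomial_span \<sigma> E = monomial_span \<sigma> E"
    unfolding delta_stable_def
    by (intro equalityI delta_op_image_monomial_span_subset[OF E]
        monomial_span_subset_delta_op_image[OF E]) blast+
qed

lemma convex_dual_cone: "convex (dual_cone \<sigma>)"
proof -
  have "dual_cone \<sigma> = (\<Inter>u\<in>\<sigma>. {x. inner u x \<ge> 0})"
    by (auto simp: dual_cone_def)
  then show ?thesis by (simp add: convex_INT convex_halfspace_ge)
qed

lemma mem_dual_cone_hull:
  assumes "\<sigma> = convex_cone hull T" and "\<forall>v\<in>T. 0 \<le> inner v x"
  shows "x \<in> dual_cone \<sigma>"
proof -
  have "convex_cone {w. 0 \<le> inner w x}"
    unfolding convex_cone_def conic_def
  proof (intro conjI allI impI)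
    have "{w. 0 \<le> inner w x} = {w. inner x w \<ge> 0}" by (auto simp: inner_commute)
    then show "convex {w. 0 \<le> inner w x}" by (simp add: convex_halfspace_ge)
  qed (auto intro!: exI[of _ 0])
  then have "\<sigma> \<subseteq> {w. 0 \<le> inner w x}"
    unfolding assms(1) using assms(2) by (intro hull_minimal) auto
  then show ?thesis by (auto simp: dual_cone_def)
qed

lemma convex_cone_hull_sum:
  assumes "finite A" "\<And>x. x \<in> A \<Longrightarrow> f x \<in> convex_cone hull S"
  shows "sum f A \<in> convex_cone hull S"
  using assms
  by (induction A rule: finite_induct) (simp_all add: convex_cone_hull_contains_0 convex_cone_hull_add)

text \<open>Gordan's alternative: since \<open>0\<close> is not a convex combination of the nonzero generators of a
  pointed cone, a hyperplane separates it from them.\<close>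
lemma pointed_cone_hull_positive_functional:
  fixes T :: "(real^'d) set"
  assumes fin: "finite T" and \<sigma>: "\<sigma> = convex_cone hull T" and pointed: "\<sigma> \<inter> uminus ` \<sigma> = {0}"
  obtains a where "\<And>v. v \<in> T \<Longrightarrow> v \<noteq> 0 \<Longrightarrow> inner v a > 0"
proof -
  let ?T = "T - {0}"
  have finT: "finite ?T" using fin by simp
  have "0 \<notin> convex hull ?T"
  proof
    assume "0 \<in> convex hull ?T"
    then obtain u where u0: "\<forall>x\<in>?T. 0 \<le> u x" and u1: "sum u ?T = 1"
      and us: "(\<Sum>x\<in>?T. u x *\<^sub>R x) = 0"
      unfolding convex_hull_finite[OF finT] by auto
    have "\<exists>v0\<in>?T. u v0 > 0"
    proof (rule ccontr)
      assume "\<not> (\<exists>v0\<in>?T. u v0 > 0)"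
      then have "sum u ?T = 0" using u0 by (intro sum.neutral) force
      then show False using u1 by simp
    qed
    then obtain v0 where v0: "v0 \<in> ?T" "u v0 > 0" by blast
    let ?w = "\<Sum>x\<in>?T - {v0}. u x *\<^sub>R x"
    have "u v0 *\<^sub>R v0 + ?w = 0" using us finT v0(1) by (simp add: sum.remove)
    then have "u v0 *\<^sub>R v0 = - ?w" by (simp add: eq_neg_iff_add_eq_0)
    moreover have "?w \<in> \<sigma>" unfolding \<sigma>
      by (rule convex_cone_hull_sum) (use finT u0 in \<open>auto intro: convex_cone_hull_mul hull_inc\<close>)
    moreover have "u v0 *\<^sub>R v0 \<in> \<sigma>" unfolding \<sigma>
      using v0 by (auto intro: convex_cone_hull_mul hull_inc)
    ultimately have "u v0 *\<^sub>R v0 = 0" using pointed by blast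
    then show False using v0 by auto
  qed
  moreover have "closed (convex hull ?T)"
    by (rule compact_imp_closed[OF finite_imp_compact_convex_hull[OF finT]])
  ultimately obtain a b where "0 < b" "\<forall>x\<in>convex hull ?T. inner a x > b"
    using separating_hyperplane_closed_0[OF convex_convex_hull] by blast
  then have "\<And>v. v \<in> T \<Longrightarrow> v \<noteq> 0 \<Longrightarrow> inner v a > 0"
    by (metis DiffI hull_inc inner_commute order.strict_trans singletonD)
  then show ?thesis by (rule that)
qed

lemma dual_cone_contains_open_cone:
  fixes T :: "(real^'d) set"
  assumes fin: "finite T" and \<sigma>: "\<sigma> = convex_cone hull T" and pointed: "\<sigma> \<inter> uminus ` \<sigma> = {0}"
  obtains U where "open U" "U \<noteq> {}" "U \<subseteq> dual_cone \<sigma>" "\<And>x c. x \<in> U \<Longrightarrow> 0 < c \<Longrightarrow> c *\<^sub>R x \<in> U"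
proof
  obtain a where a: "\<And>v. v \<in> T \<Longrightarrow> v \<noteq> 0 \<Longrightarrow> inner v a > 0"
    using pointed_cone_hull_positive_functional[OF fin \<sigma> pointed] by blast
  define U where "U = (\<Inter>v\<in>T - {0}. {x. inner v x > 0})"
  show "open U" unfolding U_def using fin by (intro open_INT) (auto intro: open_halfspace_gt)
  show "U \<noteq> {}" using a by (auto simp: U_def)
  show "U \<subseteq> dual_cone \<sigma>"
  proof
    fix x assume "x \<in> U"
    then have "0 < inner v x" if "v \<in> T" "v \<noteq> 0" for v
      using that by (auto simp: U_def)
    then have "\<forall>v\<in>T. 0 \<le> inner v x"
      by (metis inner_zero_left order.refl less_imp_le)
    then show "x \<in> dual_cone \<sigma>" by (rule mem_dual_cone_hull[OF \<sigma>])
  qed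
  show "c *\<^sub>R x \<in> U" if "x \<in> U" "0 < c" for x c
    using that by (auto simp: U_def)
qed

text \<open>\<open>s = \<lfloor>N p\<rfloor>\<close> satisfies \<open>\<parallel>p - s/N\<parallel> \<le> CARD('d)/N\<close>, so \<open>s/N\<close>, and hence \<open>s\<close>, lies in \<open>W\<close> for large \<open>N\<close>.\<close>
lemma lattice_point_in_open_cone:
  fixes W :: "(real^'d) set"
  assumes W: "open W" "p \<in> W" and cone: "\<And>x c. x \<in> W \<Longrightarrow> 0 < c \<Longrightarrow> c *\<^sub>R x \<in> W"
  obtains s where "rvec s \<in> W"
proof -
  obtain r where r: "r > 0" "ball p r \<subseteq> W" using W open_contains_ball by blast
  obtain N :: nat where N: "real CARD('d) / r < real N" using reals_Archimedean2 by blast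
  have Npos: "real N > 0"
    using N r by (smt (verit) divide_pos_pos of_nat_0_less_iff zero_less_card_finite)
  define s :: "int^'d" where "s = (\<chi> j. \<lfloor>real N * p $ j\<rfloor>)"
  define q where "q = (1 / real N) *\<^sub>R rvec s"
  have comp: "\<bar>(p - q) $ j\<bar> \<le> 1 / real N" for j
  proof -
    have "(p - q) $ j = (real N * p $ j - of_int \<lfloor>real N * p $ j\<rfloor>) / real N"
      using Npos by (simp add: q_def s_def rvec_def field_simps)
    moreover have "0 \<le> real N * p $ j - of_int \<lfloor>real N * p $ j\<rfloor>"
      "real N * p $ j - of_int \<lfloor>real N * p $ j\<rfloor> \<le> 1"
      by linarith+
    ultimately show ?thesis using Npos
      by (metis abs_of_nonneg divide_nonneg_pos divide_right_mono less_imp_le)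
  qed
  have "norm (p - q) \<le> (\<Sum>j\<in>UNIV. \<bar>(p - q) $ j\<bar>)" by (rule norm_le_l1_cart)
  also have "\<dots> \<le> (\<Sum>j\<in>(UNIV::'d set). 1 / real N)" by (rule sum_mono) (rule comp)
  also have "\<dots> = real CARD('d) / real N" by simp
  also have "\<dots> < r"
    using N Npos r by (simp add: divide_less_eq mult.commute pos_divide_less_eq)
  finally have "q \<in> W" using r by (auto simp: dist_norm)
  moreover have "rvec s = real N *\<^sub>R q" using Npos by (simp add: q_def)
  ultimately have "rvec s \<in> W" using cone Npos by simp
  then show ?thesis by (rule that)
qed

lemma supporting_functional_at_boundary:
  fixes \<sigma> :: "(real^'d) set"
  assumes "rat_poly_cone \<sigma>" and pointed: "\<sigma> \<inter> uminus ` \<sigma> = {0}"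
    and x0: "x0 \<in> dual_cone \<sigma>" "x0 \<notin> interior (dual_cone \<sigma>)"
  obtains u where "\<And>s. s \<in> semigrp \<sigma> \<Longrightarrow> 0 \<le> inner u (rvec s)" "inner u x0 = 0"
    "\<exists>s\<in>semigrp \<sigma>. 0 < inner u (rvec s)"
proof -
  obtain V :: "(int^'d) set" where "finite V" and \<sigma>: "\<sigma> = convex_cone hull (rvec ` V)"
    using assms(1) by (auto simp: rat_poly_cone_def)
  then obtain U where U: "open U" "U \<noteq> {}" "U \<subseteq> dual_cone \<sigma>"
    and cone: "\<And>x c. x \<in> U \<Longrightarrow> 0 < c \<Longrightarrow> c *\<^sub>R x \<in> U"
    using dual_cone_contains_open_cone[OF _ \<sigma> pointed] by blast
  have U_interior: "U \<subseteq> interior (dual_cone \<sigma>)" using U interior_maximal by blast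
  then have rel_int: "rel_interior (dual_cone \<sigma>) = interior (dual_cone \<sigma>)"
    using U(2) rel_interior_nonempty_interior by blast
  have "x0 \<in> closure (dual_cone \<sigma>)" using x0(1) closure_subset by blast
  moreover have "x0 \<notin> rel_interior (dual_cone \<sigma>)" using x0(2) rel_int by simp
  ultimately obtain u where sup: "\<And>y. y \<in> closure (dual_cone \<sigma>) \<Longrightarrow> inner u x0 \<le> inner u y"
    and strict: "\<And>y. y \<in> rel_interior (dual_cone \<sigma>) \<Longrightarrow> inner u x0 < inner u y"
    using supporting_hyperplane_relative_frontier[OF convex_dual_cone] by blast
  have nonneg: "inner u x0 \<le> inner u y" if "y \<in> dual_cone \<sigma>" for y
    using sup that closure_subset by blast
  have "0 \<in> dual_cone \<sigma>" "2 *\<^sub>R x0 \<in> dual_cone \<sigma>" using x0(1) by (auto simp: dual_cone_def)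
  then have "inner u x0 \<le> 0" "inner u x0 \<le> 2 * inner u x0" using nonneg by fastforce+
  then have ux0: "inner u x0 = 0" by linarith
  obtain p where "p \<in> U" using U(2) by blast
  then obtain s where "rvec s \<in> U" using lattice_point_in_open_cone[OF U(1) _ cone] by blast
  then have "s \<in> semigrp \<sigma>" "0 < inner u (rvec s)"
    using U(3) U_interior rel_int strict ux0 by (auto simp: semigrp_def)
  moreover have "0 \<le> inner u (rvec s)" if "s \<in> semigrp \<sigma>" for s
    using nonneg that ux0 by (simp add: semigrp_def)
  ultimately show ?thesis using that ux0 by blast
qed

lemma semigrp_ideal_level_set:
  fixes h :: "int^'d \<Rightarrow> real"
  assumes E: "semigrp_ideal \<sigma> E" and h: "\<And>a b. h (a + b) = h a + h b"
    and h_nonneg: "\<And>s. s \<in> semigrp \<sigma> \<Longrightarrow> 0 \<le> h s"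
  shows "semigrp_ideal \<sigma> {a \<in> E. k \<le> h a}"
  unfolding semigrp_ideal_def
proof (intro conjI ballI)
  fix b s assume b: "b \<in> {a \<in> E. k \<le> h a}" and s: "s \<in> semigrp \<sigma>"
  then have "b + s \<in> E" using E by (simp add: semigrp_ideal_def)
  moreover have "k \<le> h (b + s)" using b h_nonneg[OF s] by (simp add: h)
  ultimately show "b + s \<in> {a \<in> E. k \<le> h a}" by simp
qed (use E in \<open>auto simp: semigrp_ideal_def\<close>)

lemma delta_stable_level_set:
  fixes h :: "int^'d \<Rightarrow> real"
  assumes "delta_stable d f E" and h: "\<And>a b. h (a + b) = h a + h b" and "h d = 0"
  shows "delta_stable d f {a \<in> E. k \<le> h a}"
proof -
  have "h b = h (b - d) + h d" for b using h[of "b - d" d] by simp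
  then have "h (b - d) = h b" for b using \<open>h d = 0\<close> by simp
  then show ?thesis using assms by (simp add: delta_stable_def h)
qed

lemma inj_on_level_sets:
  fixes h :: "'a \<Rightarrow> 'b::linorder"
  shows "inj_on (\<lambda>k. {a \<in> E. k \<le> h a}) (h ` E)"
proof (rule inj_onI)
  fix k l assume "k \<in> h ` E" "l \<in> h ` E" and eq: "{a \<in> E. k \<le> h a} = {a \<in> E. l \<le> h a}"
  then have "l \<le> k" "k \<le> l" by (auto simp: set_eq_iff)
  then show "k = l" by simp
qed

lemma infinite_values_of_translation_closed:
  fixes h :: "'a::monoid_add \<Rightarrow> real"
  assumes "e \<in> E" and closed: "\<And>b. b \<in> E \<Longrightarrow> b + s \<in> E"
    and h: "\<And>a b. h (a + b) = h a + h b" and "0 < h s"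
  shows "infinite (h ` E)"
proof -
  have "h e + real n * h s \<in> h ` E" for n
  proof (induction n)
    case 0
    then show ?case using \<open>e \<in> E\<close> by simp
  next
    case (Suc n)
    then obtain b where "b \<in> E" "h b = h e + real n * h s" by auto
    then have "b + s \<in> E" "h (b + s) = h e + real (Suc n) * h s"
      using closed h by (auto simp: algebra_simps)
    then show ?case using imageI[of "b + s" E h] by simp
  qed
  then have "range (\<lambda>n. h e + real n * h s) \<subseteq> h ` E" by blast
  moreover have "inj (\<lambda>n. h e + real n * h s)" using \<open>0 < h s\<close> by (auto intro!: injI)
  ultimately show ?thesis using range_inj_infinite infinite_super by blast
qed

theorem mainTheorem13:
  fixes \<sigma> :: "(real^'d) set" and d :: "int^'d" and f :: "complex^'d \<Rightarrow> complex"
  assumes "rat_poly_cone \<sigma>"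
    and "interior \<sigma> \<noteq> {}"
    and "\<sigma> \<inter> uminus ` \<sigma> = {0}"
    and "poly_fun f"
    and "\<exists>g. poly_fun g \<and> f = (\<lambda>t. Hpoly \<sigma> d t * g t)"
    and "d \<noteq> 0"
    and "- d \<in> semigrp \<sigma>"
    and "rvec (- d) \<notin> interior (dual_cone \<sigma>)"
    and "\<exists>I. monomial_ideal \<sigma> I \<and> I \<noteq> {\<lambda>_. 0} \<and> delta_op d f ` I = I"
  shows "infinite {I. monomial_ideal \<sigma> I \<and> I \<noteq> {\<lambda>_. 0} \<and> delta_op d f ` I = I}"
proof -
  let ?X = "{I. monomial_ideal \<sigma> I \<and> I \<noteq> {\<lambda>_. 0} \<and> delta_op d f ` I = I}"
  have fixed_iff: "monomial_span \<sigma> E \<in> ?X \<longleftrightarrow> E \<noteq> {} \<and> delta_stable d f E"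
    if E: "semigrp_ideal \<sigma> E" for E
  proof -
    have "E \<subseteq> semigrp \<sigma>" using E by (simp add: semigrp_ideal_def)
    moreover have "monomial_ideal \<sigma> (monomial_span \<sigma> E)" using E monomial_ideal_iff by blast
    ultimately show ?thesis by (simp add: monomial_span_eq_zero_iff delta_op_fixes_monomial_span_iff)
  qed
  obtain I where I: "monomial_ideal \<sigma> I" "I \<in> ?X" using assms(9) by blast
  then obtain E where E: "semigrp_ideal \<sigma> E" and "I = monomial_span \<sigma> E"
    unfolding monomial_ideal_iff by blast
  then have "E \<noteq> {}" and stable: "delta_stable d f E" using I(2) fixed_iff[OF E] by simp_all
  then obtain e where "e \<in> E" by blast
  have "rvec (- d) \<in> dual_cone \<sigma>" using assms(7) by (simp add: semigrp_def)
  then obtain u where u_nonneg: "\<And>s. s \<in> semigrp \<sigma> \<Longrightarrow> 0 \<le> inner u (rvec s)"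
    and "inner u (rvec (- d)) = 0" and "\<exists>s\<in>semigrp \<sigma>. 0 < inner u (rvec s)"
    using supporting_functional_at_boundary[OF assms(1,3) _ assms(8)] by blast
  then obtain s where s: "s \<in> semigrp \<sigma>" "0 < inner u (rvec s)" and "inner u (rvec d) = 0"
    by (auto simp: rvec_uminus)
  define h where "h a = inner u (rvec a)" for a
  have h_add: "h (a + b) = h a + h b" for a b by (simp add: h_def rvec_add inner_add_right)
  let ?L = "\<lambda>k. {a \<in> E. k \<le> h a}"
  have "monomial_span \<sigma> (?L (h a)) \<in> ?X" if "a \<in> E" for a
  proof -
    have "semigrp_ideal \<sigma> (?L (h a))"
      using semigrp_ideal_level_set[OF E h_add] u_nonneg by (simp add: h_def)
    moreover have "delta_stable d f (?L (h a))"
      using delta_stable_level_set[OF stable h_add] \<open>inner u (rvec d) = 0\<close> by (simp add: h_def)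
    moreover have "a \<in> ?L (h a)" using that by simp
    ultimately show ?thesis using fixed_iff by blast
  qed
  then have fixed_levels: "(monomial_span \<sigma> \<circ> ?L) ` h ` E \<subseteq> ?X" by auto
  have inj: "inj_on (monomial_span \<sigma> \<circ> ?L) (h ` E)"
  proof (rule comp_inj_on[OF inj_on_level_sets])
    have "?L ` h ` E \<subseteq> Pow (semigrp \<sigma>)" using E by (auto simp: semigrp_ideal_def)
    then show "inj_on (monomial_span \<sigma>) (?L ` h ` E)" by (rule inj_on_subset[OF inj_on_monomial_span])
  qed
  have "infinite (h ` E)"
  proof (rule infinite_values_of_translation_closed[OF \<open>e \<in> E\<close> _ h_add])
    show "b + s \<in> E" if "b \<in> E" for b using E s(1) that by (simp add: semigrp_ideal_def)
    show "0 < h s" using s(2) by (simp add: h_def)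
  qed
  then have "infinite ((monomial_span \<sigma> \<circ> ?L) ` h ` E)" using finite_image_iff[OF inj] by blast
  then show ?thesis using infinite_super[OF fixed_levels] by blast
qed

end
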